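(* Let $\mathbb{F}$ be a field of characteristic $p>0$, let $q=p^k$ with $k>0$, let $m\ge 3$ be an integer dividing $q-1$, set $c=(q-1)/m$, and let $f\in\mathbb{F}[x]$ be a polynomial of degree $m$. Let $Y_f\subseteq\mathbb{P}^2$ be the curve $y^q+y=f(x)$, $\pi:C_f\to Y_f$ its normalization, $Q_\infty=\pi^{-1}(P_\infty)$ where $P_\infty$ is the unique pole of $x$, and let $X_f=\varphi(C_f)\subseteq\mathbb{P}^{c+1}$ be the image of the embedding $\varphi$ defined by the complete linear system $L(qQ_\infty)$. Then the space $H^0(\mathbb{P}^{c+1},\mathcal{I}_{X_f}(2))$ of quadric hypersurfaces containing $X_f$ has dimension $\binom{c+3}{2}-3c-3$.
   Context: $L(D)=H^0(C_f,\mathcal{O}_{C_f}(D))$. The space $L(qQ_\infty)$ has basis $\{1,x,y,\dots,y^c\}$ and defines an embedding $\varphi:C_f\to\mathbb{P}^{c+1}$. $\mathcal{I}_{X_f}$ is the ideal sheaf of $X_f$ in $\mathbb{P}^{c+1}$. *)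

theory Defs
  imports "HOL-Computational_Algebra.Polynomial" "HOL-Library.Function_Algebras"
begin

text \<open>Elements of F[x,y] are represented as polynomials in y whose coefficients are
polynomials in x, i.e. of type 'a poly poly.\<close>

definition polyX :: "'a::field poly poly" where
  "polyX = [:[:0, 1:]:]"

definition polyY :: "'a::field poly poly" where
  "polyY = monom 1 1"

definition curve_eqn :: "nat \<Rightarrow> 'a::field poly \<Rightarrow> 'a poly poly" where
  "curve_eqn q f = polyY ^ q + polyY - [:f:]"

text \<open>Homogeneous coordinates of the embedding phi given by the basis
1, x, y, ..., y^c of L(q Q_inf): z_0 = 1, z_1 = x, z_i = y^(i-1) for 2 <= i <= c+1.\<close>
definition emb_coord :: "nat \<Rightarrow> 'a::field poly poly" where
  "emb_coord i = (if i = 0 then 1 else if i = 1 then polyX else polyY ^ (i - 1))"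

text \<open>Quadratic forms in z_0, ..., z_(c+1): coefficient a i j of z_i z_j, with i <= j.\<close>
definition quad_forms :: "nat \<Rightarrow> (nat \<Rightarrow> nat \<Rightarrow> 'a::field) set" where
  "quad_forms c = {a. \<forall>i j. a i j \<noteq> 0 \<longrightarrow> i \<le> j \<and> j \<le> c + 1}"

definition quad_pullback :: "nat \<Rightarrow> (nat \<Rightarrow> nat \<Rightarrow> 'a::field) \<Rightarrow> 'a poly poly" where
  "quad_pullback c a =
     (\<Sum>i\<le>c+1. \<Sum>j\<le>c+1. [:[:a i j:]:] * emb_coord i * emb_coord j)"

text \<open>H^0(P^(c+1), I_{X_f}(2)): quadratic forms vanishing on X_f, i.e. whose pull-back
vanishes in the coordinate ring F[x,y]/(y^q + y - f(x)) of the (integral) curve.\<close>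
definition quadrics_containing :: "nat \<Rightarrow> nat \<Rightarrow> 'a::field poly \<Rightarrow> (nat \<Rightarrow> nat \<Rightarrow> 'a) set" where
  "quadrics_containing q c f =
     {a \<in> quad_forms c. curve_eqn q f dvd quad_pullback c a}"

definition scale_qf :: "'a::field \<Rightarrow> (nat \<Rightarrow> nat \<Rightarrow> 'a) \<Rightarrow> (nat \<Rightarrow> nat \<Rightarrow> 'a)" where
  "scale_qf r a = (\<lambda>i j. r * a i j)"

end

theory Submission
  imports Defs
begin

(*
  Each product z_i z_j of the coordinates 1, x, y, ..., y^c pulls back to a single monomial
  x^t y^s with s <= 2c < q.  Since y^q + y - f(x) has y-degree q, it divides such a pull-back
  only if the pull-back is zero, so the quadrics through X_f form the kernel of the linear map
  sending z_i z_j to its monomial.  A map sending basis vectors to monomials has kernel of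
  dimension (number of basis vectors) - (number of distinct monomials), here
  binom(c+3, 2) - (3c + 3): the monomials are y^s (s <= 2c), x y^s (s <= c) and x^2.
*)

interpretation qf: vector_space "scale_qf :: 'a::field \<Rightarrow> _"
  by unfold_locales (auto simp: scale_qf_def fun_eq_iff algebra_simps)

lemma sum_fun_apply2: "sum F A i j = (\<Sum>x\<in>A. F x i j)"
  by (induct A rule: infinite_finite_induct) auto

text \<open>The kernel of the linear map sending the basis vector of \<open>p \<in> I\<close> to the monomial \<open>\<mu> p\<close>.\<close>

definition fibre_kernel ::
    "(nat \<times> nat) set \<Rightarrow> (nat \<times> nat \<Rightarrow> 'm) \<Rightarrow> (nat \<Rightarrow> nat \<Rightarrow> 'a::field) set" where
  "fibre_kernel I \<mu> =
     {a. (\<forall>i j. a i j \<noteq> 0 \<longrightarrow> (i, j) \<in> I) \<and>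
         (\<forall>m. (\<Sum>(i, j)\<in>{p\<in>I. \<mu> p = m}. a i j) = 0)}"

definition unit_qf :: "nat \<times> nat \<Rightarrow> nat \<Rightarrow> nat \<Rightarrow> 'a::field" where
  "unit_qf p = (\<lambda>i j. if (i, j) = p then 1 else 0)"

lemma fibre_sum_unit_qf:
  assumes "finite I" and "p \<in> I"
  shows "(\<Sum>(i, j)\<in>{q\<in>I. \<mu> q = m}. unit_qf p i j) = (if \<mu> p = m then 1 else 0)"
  using assms by (simp add: unit_qf_def case_prod_unfold prod_eq_iff[symmetric] sum.delta')

lemma subspace_fibre_kernel: "qf.subspace (fibre_kernel I \<mu>)"
  by (auto simp: qf.subspace_def fibre_kernel_def scale_qf_def case_prod_unfold
      sum.distrib sum_distrib_left[symmetric]) (metis add.right_neutral)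

text \<open>Given a representative \<open>r m\<close> in every fibre, the kernel vectors of the
  non-representatives form a basis of the kernel.\<close>

context
  fixes I :: "(nat \<times> nat) set" and \<mu> :: "nat \<times> nat \<Rightarrow> 'm" and r :: "'m \<Rightarrow> nat \<times> nat"
  assumes finite_I: "finite I"
    and section_in: "\<And>m. m \<in> \<mu> ` I \<Longrightarrow> r m \<in> I"
    and section_fibre: "\<And>m. m \<in> \<mu> ` I \<Longrightarrow> \<mu> (r m) = m"
begin

private abbreviation "free_index \<equiv> I - r ` \<mu> ` I"

definition kernel_vector :: "nat \<times> nat \<Rightarrow> nat \<Rightarrow> nat \<Rightarrow> 'a::field" where
  "kernel_vector p = unit_qf p - unit_qf (r (\<mu> p))"

lemma inj_on_section: "inj_on r (\<mu> ` I)"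
  by (metis inj_on_inverseI section_fibre)

lemma card_free_index: "card free_index = card I - card (\<mu> ` I)"
  using finite_I section_in by (subst card_Diff_subset) (auto simp: card_image[OF inj_on_section])

lemma kernel_vector_in_fibre_kernel:
  assumes "p \<in> I" shows "kernel_vector p \<in> fibre_kernel I \<mu>"
proof -
  have "r (\<mu> p) \<in> I" "\<mu> (r (\<mu> p)) = \<mu> p"
    using assms section_in section_fibre by auto
  then show ?thesis
    using assms finite_I
    by (auto simp: fibre_kernel_def kernel_vector_def sum_subtractf case_prod_unfold
        fibre_sum_unit_qf[unfolded case_prod_unfold]) (auto simp: unit_qf_def split: if_splits)
qed

lemma kernel_vector_at_free_index:
  assumes "p \<in> free_index" and "p' \<in> free_index"
  shows "kernel_vector p (fst p') (snd p') = (if p = p' then 1 else 0)"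
  using assms by (auto simp: kernel_vector_def unit_qf_def)

lemma inj_on_kernel_vector: "inj_on kernel_vector free_index"
proof (rule inj_onI)
  fix p p' assume "p \<in> free_index" "p' \<in> free_index" "kernel_vector p = kernel_vector p'"
  then show "p = p'"
    using kernel_vector_at_free_index[of p p'] kernel_vector_at_free_index[of p' p']
    by (metis zero_neq_one)
qed

lemma sum_kernel_vectors_at_free_index:
  assumes "p' \<in> free_index"
  shows "(\<Sum>p\<in>free_index. g p * kernel_vector p (fst p') (snd p')) = g p'"
  using assms finite_I by (simp add: kernel_vector_at_free_index if_distrib sum.delta' cong: if_cong)

lemma fibre_kernel_eq_0:
  assumes b: "b \<in> fibre_kernel I \<mu>" and vanish: "\<And>p. p \<in> free_index \<Longrightarrow> b (fst p) (snd p) = 0"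
  shows "b = 0"
proof (intro ext)
  fix i j
  consider "(i, j) \<notin> I" | "(i, j) \<in> free_index" | m where "m \<in> \<mu> ` I" "(i, j) = r m"
    by blast
  then show "b i j = 0 i j"
  proof cases
    case 1
    then show ?thesis using b by (auto simp: fibre_kernel_def)
  next
    case 2
    then show ?thesis using vanish[OF 2] by simp
  next
    case 3
    have "q \<notin> r ` \<mu> ` I" if "\<mu> q = m" and "q \<noteq> r m" for q
      using that by (auto simp: section_fibre)
    then have "(\<Sum>(i, j)\<in>{q\<in>I. \<mu> q = m} - {r m}. b i j) = 0"
      using vanish by (intro sum.neutral) (auto simp: case_prod_unfold)
    moreover have "(\<Sum>(i, j)\<in>{q\<in>I. \<mu> q = m}. b i j)
        = case_prod b (r m) + (\<Sum>(i, j)\<in>{q\<in>I. \<mu> q = m} - {r m}. b i j)"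
      using 3 section_in section_fibre finite_I by (intro sum.remove) auto
    moreover have "(\<Sum>(i, j)\<in>{q\<in>I. \<mu> q = m}. b i j) = 0"
      using b by (simp add: fibre_kernel_def)
    ultimately show ?thesis
      by (simp add: 3(2)[symmetric])
  qed
qed

lemma kernel_vectors_independent:
  "qf.independent (kernel_vector ` free_index :: (nat \<Rightarrow> nat \<Rightarrow> 'a::field) set)"
proof (rule qf.independent_if_scalars_zero)
  show "finite (kernel_vector ` free_index)"
    using finite_I by simp
next
  fix g :: "(nat \<Rightarrow> nat \<Rightarrow> 'a) \<Rightarrow> 'a" and v :: "nat \<Rightarrow> nat \<Rightarrow> 'a"
  assume sum0: "(\<Sum>x\<in>kernel_vector ` free_index. scale_qf (g x) x) = 0"
    and "v \<in> kernel_vector ` free_index"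
  then obtain p' where p': "p' \<in> free_index" "v = kernel_vector p'" by blast
  have "0 = (\<Sum>p\<in>free_index. scale_qf (g (kernel_vector p)) (kernel_vector p)) (fst p') (snd p')"
    using sum0 by (simp add: sum.reindex[OF inj_on_kernel_vector])
  also have "\<dots> = g v"
    using p' by (simp add: sum_fun_apply2 scale_qf_def sum_kernel_vectors_at_free_index)
  finally show "g v = 0" by simp
qed

lemma fibre_kernel_subset_span: "fibre_kernel I \<mu> \<subseteq> qf.span (kernel_vector ` free_index)"
proof
  fix a assume a: "a \<in> fibre_kernel I \<mu>"
  define S where "S = (\<Sum>p\<in>free_index. scale_qf (a (fst p) (snd p)) (kernel_vector p))"
  have S_span: "S \<in> qf.span (kernel_vector ` free_index)"
    unfolding S_def by (intro qf.span_sum qf.span_scale qf.span_base) auto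
  have "qf.span (kernel_vector ` free_index) \<subseteq> fibre_kernel I \<mu>"
    using kernel_vector_in_fibre_kernel by (intro qf.span_minimal subspace_fibre_kernel) auto
  with a S_span have "a - S \<in> fibre_kernel I \<mu>"
    by (auto intro: qf.subspace_diff[OF subspace_fibre_kernel])
  moreover have "(a - S) (fst p) (snd p) = 0" if "p \<in> free_index" for p
    using that by (simp add: S_def sum_fun_apply2 scale_qf_def sum_kernel_vectors_at_free_index)
  ultimately have "a - S = 0"
    by (rule fibre_kernel_eq_0)
  with S_span show "a \<in> qf.span (kernel_vector ` free_index)"
    by simp
qed

lemma dim_fibre_kernel_section:
  "qf.dim (fibre_kernel I \<mu> :: (nat \<Rightarrow> nat \<Rightarrow> 'a::field) set) = card I - card (\<mu> ` I)"
proof -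
  have "kernel_vector ` free_index \<subseteq> fibre_kernel I \<mu>"
    using kernel_vector_in_fibre_kernel by auto
  from qf.basis_card_eq_dim[OF this fibre_kernel_subset_span kernel_vectors_independent]
  show ?thesis
    unfolding card_image[OF inj_on_kernel_vector] card_free_index by (rule sym)
qed

end

theorem dim_fibre_kernel:
  assumes "finite I"
  shows "qf.dim (fibre_kernel I \<mu> :: (nat \<Rightarrow> nat \<Rightarrow> 'a::field) set) = card I - card (\<mu> ` I)"
proof -
  define r where "r m = (SOME p. p \<in> I \<and> \<mu> p = m)" for m
  have "r m \<in> I \<and> \<mu> (r m) = m" if "m \<in> \<mu> ` I" for m
  proof -
    from that obtain p where "p \<in> I \<and> \<mu> p = m" by blast
    then show ?thesis
      unfolding r_def by (rule someI[where P = "\<lambda>p. p \<in> I \<and> \<mu> p = m"])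
  qed
  then show ?thesis
    by (intro dim_fibre_kernel_section[OF assms, where r = r]) auto
qed

definition y_exp :: "nat \<Rightarrow> nat" where
  "y_exp i = (if i \<le> 1 then 0 else i - 1)"

definition x_exp :: "nat \<Rightarrow> nat" where
  "x_exp i = (if i = 1 then 1 else 0)"

lemma emb_coord_eq_monom: "emb_coord i = monom (monom 1 (x_exp i)) (y_exp i)"
proof -
  consider "i = 0" | "i = 1" | "i \<ge> 2" by linarith
  then show ?thesis
  proof cases
    case 1
    then show ?thesis by (simp add: emb_coord_def x_exp_def y_exp_def)
  next
    case 2
    then show ?thesis by (simp add: emb_coord_def x_exp_def y_exp_def polyX_def monom_0 monom_Suc)
  next
    case 3
    then show ?thesis
      by (simp add: emb_coord_def x_exp_def y_exp_def polyY_def monom_power)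
  qed
qed

definition quad_index :: "nat \<Rightarrow> (nat \<times> nat) set" where
  "quad_index c = {(i, j). i \<le> j \<and> j \<le> c + 1}"

text \<open>The pull-back of \<open>z\<^sub>i z\<^sub>j\<close> is \<open>x\<^sup>t y\<^sup>s\<close> with \<open>quad_exp (i, j) = (s, t)\<close>, matching
  \<open>coeff (coeff _ s) t\<close>.\<close>

definition quad_exp :: "nat \<times> nat \<Rightarrow> nat \<times> nat" where
  "quad_exp = (\<lambda>(i, j). (y_exp i + y_exp j, x_exp i + x_exp j))"

lemma finite_quad_index: "finite (quad_index c)"
  by (rule finite_subset[of _ "{..c + 1} \<times> {..c + 1}"]) (auto simp: quad_index_def)

lemma coeff_quad_pullback:
  assumes "a \<in> quad_forms c"
  shows "coeff (coeff (quad_pullback c a) s) t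
           = (\<Sum>(i, j)\<in>{p\<in>quad_index c. quad_exp p = (s, t)}. a i j)"
proof -
  let ?term = "\<lambda>i j. if quad_exp (i, j) = (s, t) then a i j else 0"
  have expand: "quad_pullback c a
      = (\<Sum>i\<le>c + 1. \<Sum>j\<le>c + 1. monom (monom (a i j) (x_exp i + x_exp j)) (y_exp i + y_exp j))"
    unfolding quad_pullback_def emb_coord_eq_monom by (simp add: monom_0[symmetric] mult_monom)
  have "coeff (coeff (quad_pullback c a) s) t = (\<Sum>i\<le>c + 1. \<Sum>j\<le>c + 1. ?term i j)"
    unfolding expand coeff_sum by (intro sum.cong refl) (auto simp: coeff_monom quad_exp_def)
  also have "\<dots> = (\<Sum>(i, j)\<in>{..c + 1} \<times> {..c + 1}. ?term i j)"
    by (rule sum.cartesian_product)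
  also have "\<dots> = (\<Sum>(i, j)\<in>quad_index c. ?term i j)"
    using assms
    by (intro sum.mono_neutral_right) (auto simp: quad_index_def quad_forms_def split: if_splits)
  also have "\<dots> = (\<Sum>(i, j)\<in>{p\<in>quad_index c. quad_exp p = (s, t)}. a i j)"
    by (simp add: sum.inter_filter[OF finite_quad_index] case_prod_unfold)
  finally show ?thesis .
qed

lemma degree_quad_pullback:
  assumes "a \<in> quad_forms c"
  shows "degree (quad_pullback c a) \<le> 2 * c"
proof (rule degree_le, intro allI impI)
  fix s assume "2 * c < s"
  then have no_terms: "{p\<in>quad_index c. quad_exp p = (s, t)} = {}" for t
    by (auto simp: quad_index_def quad_exp_def y_exp_def)
  have "coeff (coeff (quad_pullback c a) s) t = 0" for t
    unfolding coeff_quad_pullback[OF assms] no_terms by simp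
  then show "coeff (quad_pullback c a) s = 0"
    by (simp add: poly_eq_iff)
qed

lemma degree_curve_eqn_ge:
  assumes "q \<ge> 2"
  shows "q \<le> degree (curve_eqn q f)"
proof (rule le_degree)
  have "coeff (curve_eqn q f) q = 1"
    using assms
    by (cases q) (simp_all add: curve_eqn_def polyY_def monom_power coeff_monom coeff_pCons mult_monom)
  then show "coeff (curve_eqn q f) q \<noteq> 0" by simp
qed

lemma quadrics_containing_eq_fibre_kernel:
  assumes "q \<ge> 2" and "2 * c < q"
  shows "quadrics_containing q c f = fibre_kernel (quad_index c) quad_exp"
proof -
  have "curve_eqn q f dvd quad_pullback c a \<longleftrightarrow> quad_pullback c a = 0"
    if "a \<in> quad_forms c" for a
  proof
    assume dvd: "curve_eqn q f dvd quad_pullback c a"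
    show "quad_pullback c a = 0"
    proof (rule ccontr)
      assume "quad_pullback c a \<noteq> 0"
      with dvd have "degree (curve_eqn q f) \<le> degree (quad_pullback c a)"
        by (rule dvd_imp_degree_le)
      with degree_quad_pullback[OF that] degree_curve_eqn_ge[OF assms(1), of f] assms(2)
      show False by linarith
    qed
  qed simp
  moreover have "quad_pullback c a = 0
      \<longleftrightarrow> (\<forall>m. (\<Sum>(i, j)\<in>{p\<in>quad_index c. quad_exp p = m}. a i j) = 0)"
    if "a \<in> quad_forms c" for a
    by (simp add: poly_eq_iff coeff_quad_pullback[OF that, symmetric])
  ultimately show ?thesis
    by (auto simp: quadrics_containing_def fibre_kernel_def quad_forms_def quad_index_def)
qed

lemma card_quad_index: "card (quad_index c) = c + 3 choose 2"
proof (induction c)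
  case 0
  have "quad_index 0 = {(0, 0), (0, 1), (1, 1)}"
    by (auto simp: quad_index_def)
  then show ?case
    by (simp add: numeral_3_eq_3 numeral_2_eq_2)
next
  case (Suc c)
  have "quad_index (Suc c) = quad_index c \<union> (\<lambda>i. (i, c + 2)) ` {..c + 2}"
    by (auto simp: quad_index_def)
  moreover have "quad_index c \<inter> (\<lambda>i. (i, c + 2)) ` {..c + 2} = {}"
    by (auto simp: quad_index_def)
  moreover have "card ((\<lambda>i. (i, c + 2)) ` {..c + 2}) = c + 3"
    by (simp add: card_image inj_on_def)
  ultimately have "card (quad_index (Suc c)) = card (quad_index c) + (c + 3)"
    by (simp add: card_Un_disjoint finite_quad_index)
  also have "\<dots> = Suc c + 3 choose 2"
    using Suc by (simp add: numeral_3_eq_3 numeral_2_eq_2)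
  finally show ?case .
qed

lemma quad_exp_image:
  "quad_exp ` quad_index c = {..2 * c} \<times> {0} \<union> {..c} \<times> {1} \<union> {(0, 2)}"
proof -
  note exp_defs = quad_index_def quad_exp_def x_exp_def y_exp_def
  have "(s, 0) \<in> quad_exp ` quad_index c" if "s \<le> 2 * c" for s
  proof -
    consider "s = 0" | "1 \<le> s" "s \<le> c" | "c < s" by linarith
    then show ?thesis
    proof cases
      case 1
      show ?thesis
        by (rule rev_image_eqI[of "(0, 0)"]) (auto simp: 1 exp_defs)
    next
      case 2
      show ?thesis
        by (rule rev_image_eqI[of "(0, s + 1)"]) (use 2 in \<open>auto simp: exp_defs\<close>)
    next
      case 3
      show ?thesis
        by (rule rev_image_eqI[of "(s - c + 1, c + 1)"]) (use 3 that in \<open>auto simp: exp_defs\<close>)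
    qed
  qed
  moreover have "(s, 1) \<in> quad_exp ` quad_index c" if "s \<le> c" for s
  proof (cases "s = 0")
    case True
    show ?thesis
      by (rule rev_image_eqI[of "(0, 1)"]) (auto simp: True exp_defs)
  next
    case False
    show ?thesis
      by (rule rev_image_eqI[of "(1, s + 1)"]) (use False that in \<open>auto simp: exp_defs\<close>)
  qed
  moreover have "(0, 2) \<in> quad_exp ` quad_index c"
    by (rule rev_image_eqI[of "(1, 1)"]) (auto simp: exp_defs)
  ultimately have "{..2 * c} \<times> {0} \<union> {..c} \<times> {1} \<union> {(0, 2)} \<subseteq> quad_exp ` quad_index c"
    by auto
  moreover have "quad_exp ` quad_index c \<subseteq> {..2 * c} \<times> {0} \<union> {..c} \<times> {1} \<union> {(0, 2)}"
    by (auto simp: exp_defs split: if_splits)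
  ultimately show ?thesis
    by (rule equalityI[rotated])
qed

lemma card_quad_exp_image: "card (quad_exp ` quad_index c) = 3 * c + 3"
  unfolding quad_exp_image by (subst card_Un_disjoint; auto simp: card_cartesian_product)+

theorem corollary3p5:
  fixes f :: "'a::field poly" and p k q m c :: nat
  assumes "prime p" and "CHAR('a) = p"
    and "k > 0" and "q = p ^ k"
    and "m \<ge> 3" and "m dvd q - 1" and "c = (q - 1) div m"
    and "degree f = m"
  shows "vector_space.dim scale_qf (quadrics_containing q c f)
           = (c + 3 choose 2) - 3 * c - 3"
proof -
  have "2 \<le> p"
    using \<open>prime p\<close> by (rule prime_ge_2_nat)
  also have "p \<le> q"
    using \<open>k > 0\<close> \<open>2 \<le> p\<close> \<open>q = p ^ k\<close> by (simp add: self_le_power)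
  finally have "2 \<le> q" .
  have "q - 1 = m * c"
    using \<open>m dvd q - 1\<close> \<open>c = (q - 1) div m\<close> by simp
  moreover have "3 * c \<le> m * c"
    using \<open>m \<ge> 3\<close> by (rule mult_le_mono1)
  ultimately have "2 * c < q"
    using \<open>2 \<le> q\<close> by linarith
  then show ?thesis
    using \<open>2 \<le> q\<close>
    by (simp add: quadrics_containing_eq_fibre_kernel dim_fibre_kernel finite_quad_index
        card_quad_index card_quad_exp_image)
qed

end
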